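(* Let $m\geq 3$ and let $i,k$ be nonnegative integers with $i+k\leq m$. Write $P_{i,k}:=E^*_{i+k}A_1E^*_{i+k-1}A_1E^*_{i+k-2}\cdots E^*_{i+1}A_1E^*_{i}$. Then: (i) if $i$ is even and $k$ is odd, $P_{i,k}=\big((\tfrac{k-1}{2})!\big)^2\,\tfrac{k+1}{2}\,M^{\frac{k-1}{2},\frac{k-1}{2}}_{\frac{i+k-1}{2},\frac{2m-i}{2}}$; (ii) if $i$ is even and $k\geq2$ is even, $P_{i,k}=\big((\tfrac{k}{2})!\big)^2\,M^{\frac{2m-k}{2},\frac{2m-i-k}{2}}_{\frac{2m-i-k}{2},\frac{2m-i}{2}}$; (iii) if $i$ is odd and $k$ is odd, $P_{i,k}=\big((\tfrac{k-1}{2})!\big)^2\,\tfrac{k+1}{2}\,M^{\frac{k-1}{2},0}_{\frac{2m-i-k}{2},\frac{i-1}{2}}$; (iv) if $i$ is odd and $k\geq 2$ is even, $P_{i,k}=\big((\tfrac{k}{2})!\big)^2\,M^{\frac{2m-k}{2},\frac{i-1}{2}}_{\frac{i+k-1}{2},\frac{i-1}{2}}$.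
   Context: Let $m\geq3$, $S=\{1,\ldots,2m+1\}$, $X$ the set of $m$-subsets of $S$, and $O_{m+1}$ the Odd graph on $X$ (adjacency = disjointness). Its distance is $\partial(x,y)=2|x\cap y|+1$ if $|x\cap y|\leq\lfloor\frac{m-1}{2}\rfloor$ and $2m-2|x\cap y|$ otherwise. Let $x_0=\{1,\ldots,m\}$, $A_1$ the adjacency matrix, and $E^*_i$ ($0\leq i\leq m$) the diagonal $X\times X$ matrix with $(y,y)$-entry $1$ iff $\partial(x_0,y)=i$. For integers $i,j,t,p$, $M^{t,p}_{i,j}$ denotes the $X\times X$ $0/1$-matrix whose $(x,y)$-entry is $1$ iff $|x_0\cap x|=i$, $|x_0\cap y|=j$, $|x\cap y|=t$ and $|x_0\cap x\cap y|=p$. *)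

theory Defs
  imports Main
begin

definition groundS :: "nat \<Rightarrow> nat set" where
  "groundS m = {1..2*m+1}"

definition verts :: "nat \<Rightarrow> nat set set" where
  "verts m = {x. x \<subseteq> groundS m \<and> card x = m}"

text \<open>Distance in the Odd graph O_(m+1), as given in the context.\<close>
definition odist :: "nat \<Rightarrow> nat set \<Rightarrow> nat set \<Rightarrow> nat" where
  "odist m x y = (if card (x \<inter> y) \<le> (m - 1) div 2 then 2 * card (x \<inter> y) + 1
                   else 2 * m - 2 * card (x \<inter> y))"

definition base_x0 :: "nat \<Rightarrow> nat set" where
  "base_x0 m = {1..m}"

text \<open>X x X matrices are represented as functions; entries outside X are 0.\<close>
type_synonym mat = "nat set \<Rightarrow> nat set \<Rightarrow> int"

definition mmult :: "nat \<Rightarrow> mat \<Rightarrow> mat \<Rightarrow> mat" where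
  "mmult m A B = (\<lambda>x y. \<Sum>z\<in>verts m. A x z * B z y)"

definition adjA :: "nat \<Rightarrow> mat" where
  "adjA m = (\<lambda>x y. if x \<in> verts m \<and> y \<in> verts m \<and> x \<inter> y = {} then 1 else 0)"

definition Estar :: "nat \<Rightarrow> nat \<Rightarrow> mat" where
  "Estar m i = (\<lambda>x y. if x \<in> verts m \<and> x = y \<and> odist m (base_x0 m) y = i then 1 else 0)"

text \<open>M^{t,p}_{i,j}\<close>
definition Mmat :: "nat \<Rightarrow> nat \<Rightarrow> nat \<Rightarrow> nat \<Rightarrow> nat \<Rightarrow> mat" where
  "Mmat m i j t p = (\<lambda>x y. if x \<in> verts m \<and> y \<in> verts m
      \<and> card (base_x0 m \<inter> x) = i \<and> card (base_x0 m \<inter> y) = j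
      \<and> card (x \<inter> y) = t \<and> card (base_x0 m \<inter> x \<inter> y) = p then 1 else 0)"

fun Pmat :: "nat \<Rightarrow> nat \<Rightarrow> nat \<Rightarrow> mat" where
  "Pmat m i 0 = Estar m i"
| "Pmat m i (Suc k) = mmult m (mmult m (Estar m (i + Suc k)) (adjA m)) (Pmat m i k)"

end

theory Submission
  imports Defs
begin

text \<open>
  Both sides depend on (x, y) only through the four numbers
  (|x0 \<inter> x|, |x0 \<inter> y|, |x \<inter> y|, |x0 \<inter> x \<inter> y|), and P_{i,k}(x, y) is c_k times the
  indicator that they equal an explicit target quadruple.
  The neighbours of x are the sets S - x - {e} with e \<notin> x, and the four numbers for such a
  neighbour are determined by whether e lies in x0 and/or in y; so the sum over neighbours is
  a combination of four values weighted by the sizes of the four corresponding regions of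
  S - x. Together with the constraint on the distance of x from x0, exactly one region can
  reach the target of step k, and it has k div 2 + 1 elements; hence
  c_{k+1} = c_k (k div 2 + 1), which gives the factorials of the statement.
\<close>

definition odist_level :: "nat \<Rightarrow> nat \<Rightarrow> nat" where
  "odist_level m a = (if a \<le> (m - 1) div 2 then 2 * a + 1 else 2 * m - 2 * a)"

lemma odist_level_eq_odd_iff:
  assumes "2 * c + 1 \<le> m"
  shows "odist_level m a = 2 * c + 1 \<longleftrightarrow> a = c"
proof (cases "a \<le> (m - 1) div 2")
  case False
  then have "a \<noteq> c" using assms by linarith
  moreover have "2 * m - 2 * a \<noteq> 2 * c + 1" by presburger
  ultimately show ?thesis using False unfolding odist_level_def by simp
qed (simp add: odist_level_def)

lemma odist_level_eq_even_iff:
  assumes "a \<le> m" "2 * c \<le> m" "1 \<le> m"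
  shows "odist_level m a = 2 * c \<longleftrightarrow> a = m - c"
proof (cases "a \<le> (m - 1) div 2")
  case True
  then have "a \<noteq> m - c" using assms(2,3) by linarith
  moreover have "2 * a + 1 \<noteq> 2 * c" by presburger
  ultimately show ?thesis using True unfolding odist_level_def by simp
qed (use assms in \<open>auto simp: odist_level_def\<close>)

lemma odist_base_x0: "odist m (base_x0 m) x = odist_level m (card (base_x0 m \<inter> x))"
  unfolding odist_def odist_level_def by simp

lemma finite_verts: "finite (verts m)"
  by (rule finite_subset[of _ "Pow (groundS m)"]) (auto simp: verts_def groundS_def)

lemma mem_vertsD:
  assumes "x \<in> verts m"
  shows "x \<subseteq> groundS m" "card x = m" "finite x"
  using assms by (auto simp: verts_def groundS_def intro: finite_subset)

lemma verts_eq_iff_card_Int: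
  assumes "x \<in> verts m" "y \<in> verts m"
  shows "x = y \<longleftrightarrow> card (x \<inter> y) = m"
proof
  assume c: "card (x \<inter> y) = m"
  have "x \<inter> y = x" by (rule card_subset_eq) (use c mem_vertsD[OF assms(1)] in auto)
  moreover have "x \<inter> y = y" by (rule card_subset_eq) (use c mem_vertsD[OF assms(2)] in auto)
  ultimately show "x = y" by simp
qed (use assms in \<open>simp add: mem_vertsD\<close>)

lemma sum_disjoint_verts:
  assumes x: "x \<in> verts m"
  shows "(\<Sum>z\<in>{z\<in>verts m. z \<inter> x = {}}. g z) = (\<Sum>e\<in>groundS m - x. g (groundS m - x - {e}))"
proof -
  let ?S = "groundS m"
  have fin: "finite ?S" by (simp add: groundS_def)
  have card_compl: "card (?S - x) = m + 1"
    using mem_vertsD[OF x] by (simp add: card_Diff_subset groundS_def)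
  have "bij_betw (\<lambda>e. ?S - x - {e}) (?S - x) {z\<in>verts m. z \<inter> x = {}}"
  proof (rule bij_betw_imageI)
    show "inj_on (\<lambda>e. ?S - x - {e}) (?S - x)" by (auto simp: inj_on_def)
    show "(\<lambda>e. ?S - x - {e}) ` (?S - x) = {z\<in>verts m. z \<inter> x = {}}"
    proof (intro equalityI subsetI)
      fix z assume "z \<in> (\<lambda>e. ?S - x - {e}) ` (?S - x)"
      with fin card_compl show "z \<in> {z\<in>verts m. z \<inter> x = {}}"
        by (auto simp: verts_def)
    next
      fix z assume "z \<in> {z\<in>verts m. z \<inter> x = {}}"
      then have "z \<subseteq> ?S - x" "card z = m" using mem_vertsD[of z m] by auto
      with fin card_compl have "card (?S - x - z) = 1" by (simp add: card_Diff_subset finite_subset)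
      then obtain e where "?S - x - z = {e}" by (auto simp: card_Suc_eq)
      with \<open>z \<subseteq> ?S - x\<close> have "z = ?S - x - {e}" "e \<in> ?S - x" by blast+
      then show "z \<in> (\<lambda>e. ?S - x - {e}) ` (?S - x)" by blast
    qed
  qed
  then show ?thesis by (rule sum.reindex_bij_betw[symmetric])
qed

lemma sum_split_membership:
  fixes G :: "bool \<Rightarrow> 'a::comm_semiring_1"
  assumes "finite A"
  shows "(\<Sum>e\<in>A. G (e \<in> B)) = of_nat (card (A \<inter> B)) * G True + of_nat (card (A - B)) * G False"
proof -
  have "(\<Sum>e\<in>A. G (e \<in> B)) = (\<Sum>e\<in>A \<inter> B. G (e \<in> B)) + (\<Sum>e\<in>A - B. G (e \<in> B))"
    using assms by (rule sum.Int_Diff)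
  also have "\<dots> = (\<Sum>e\<in>A \<inter> B. G True) + (\<Sum>e\<in>A - B. G False)"
    by (intro arg_cong2[where f = "(+)"] sum.cong) auto
  finally show ?thesis by simp
qed

lemma sum_split_membership2:
  fixes F :: "bool \<Rightarrow> bool \<Rightarrow> 'a::comm_semiring_1"
  assumes "finite A"
  shows "(\<Sum>e\<in>A. F (e \<in> B) (e \<in> C)) =
      of_nat (card (A \<inter> B \<inter> C)) * F True True + of_nat (card (A \<inter> B - C)) * F True False
    + of_nat (card ((A - B) \<inter> C)) * F False True + of_nat (card (A - B - C)) * F False False"
proof -
  have "(\<Sum>e\<in>A. F (e \<in> B) (e \<in> C))
      = (\<Sum>e\<in>A \<inter> B. F (e \<in> B) (e \<in> C)) + (\<Sum>e\<in>A - B. F (e \<in> B) (e \<in> C))"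
    using assms by (rule sum.Int_Diff)
  also have "\<dots> = (\<Sum>e\<in>A \<inter> B. F True (e \<in> C)) + (\<Sum>e\<in>A - B. F False (e \<in> C))"
    by (intro arg_cong2[where f = "(+)"] sum.cong) auto
  finally show ?thesis using assms by (simp add: sum_split_membership algebra_simps)
qed

definition stats :: "nat \<Rightarrow> nat set \<Rightarrow> nat set \<Rightarrow> nat \<times> nat \<times> nat \<times> nat" where
  "stats m x y = (card (base_x0 m \<inter> x), card (base_x0 m \<inter> y), card (x \<inter> y), card (base_x0 m \<inter> x \<inter> y))"

text \<open>Necessary conditions on stats m x y = (a, b, t, p): besides p \<le> a, t, the four regions of
  S - x cut out by x0 and y have nonnegative size, and |x0 \<inter> x \<union> x \<inter> y| \<le> |x|.\<close>

definition stats_feasible :: "nat \<Rightarrow> nat \<Rightarrow> nat \<Rightarrow> nat \<Rightarrow> nat \<Rightarrow> bool" where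
  "stats_feasible m a b t p \<longleftrightarrow> p \<le> a \<and> p \<le> b \<and> p \<le> t \<and> a + t \<le> m + p
     \<and> a + b \<le> m + p \<and> b + t \<le> m + p \<and> m + p \<le> a + b + t + 1"

text \<open>The sum of G over the statistics of the neighbours S - x - {e} of x, grouped by the
  region of e: in x0 \<inter> y, in x0 - y, in y - x0, outside both.\<close>

definition nbr_combination ::
    "nat \<Rightarrow> nat \<Rightarrow> nat \<Rightarrow> nat \<Rightarrow> nat \<Rightarrow> (nat \<Rightarrow> nat \<Rightarrow> nat \<Rightarrow> nat \<Rightarrow> int) \<Rightarrow> int" where
  "nbr_combination m a b t p G =
       int (b - p) * G (m - a - 1) b (m - t - 1) (b - p - 1)
     + (int m + int p - int a - int b) * G (m - a - 1) b (m - t) (b - p)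
     + (int m + int p - int b - int t) * G (m - a) b (m - t - 1) (b - p)
     + (int a + int b + int t + 1 - int m - int p) * G (m - a) b (m - t) (b - p)"

lemma nbr_combination_scale:
  "nbr_combination m a b t p (\<lambda>a b t p. c * G a b t p) = c * nbr_combination m a b t p G"
  by (simp add: nbr_combination_def algebra_simps)

lemma nbr_region_cards:
  assumes x: "x \<in> verts m" and y: "y \<in> verts m" and st: "stats m x y = (a, b, t, p)"
  defines "X0 \<equiv> base_x0 m" and "S \<equiv> groundS m"
  shows "stats_feasible m a b t p"
    and "card ((S - x) \<inter> X0 \<inter> y) = b - p"
    and "int (card ((S - x) \<inter> X0 - y)) = int m + int p - int a - int b"
    and "int (card ((S - x - X0) \<inter> y)) = int m + int p - int b - int t"
    and "int (card (S - x - X0 - y)) = int a + int b + int t + 1 - int m - int p"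
proof -
  note xs = mem_vertsD[OF x, folded S_def] and ys = mem_vertsD[OF y, folded S_def]
  have X0s: "X0 \<subseteq> S" "card X0 = m" "finite X0" by (auto simp: X0_def S_def base_x0_def groundS_def)
  have fin: "finite S" "card S = 2 * m + 1" by (auto simp: S_def groundS_def)
  have a: "a = card (X0 \<inter> x)" and b: "b = card (X0 \<inter> y)" and t: "t = card (x \<inter> y)"
    and p: "p = card (X0 \<inter> x \<inter> y)" using st by (auto simp: stats_def X0_def)
  have "p \<le> a" "p \<le> b" unfolding a b p by (rule card_mono; use X0s in auto)+
  have "p \<le> t" unfolding t p by (rule card_mono) (use xs in auto)
  have "a \<le> m" "t \<le> m" unfolding a t
    using card_mono[of X0 "X0 \<inter> x"] card_mono[of x "x \<inter> y"] X0s xs by auto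
  have "card ((X0 \<inter> x) \<union> (x \<inter> y)) \<le> m"
    using card_mono[of x "(X0 \<inter> x) \<union> (x \<inter> y)"] xs by auto
  moreover have "card (X0 \<inter> x) + card (x \<inter> y) = card ((X0 \<inter> x) \<union> (x \<inter> y)) + card (X0 \<inter> x \<inter> y)"
    using card_Un_Int[of "X0 \<inter> x" "x \<inter> y"] xs by (simp add: Int_ac)
  ultimately have "a + t \<le> m + p" unfolding a t p by linarith
  have cA: "card (S - x) = m + 1" using xs fin by (simp add: card_Diff_subset)
  have "(S - x) \<inter> X0 = X0 - x" "(S - x) \<inter> y = y - x" "(S - x) \<inter> X0 \<inter> y = X0 \<inter> y - x"
    using X0s ys by blast+
  then have cAX: "card ((S - x) \<inter> X0) = m - a" and cAY: "card ((S - x) \<inter> y) = m - t"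
    and cAXY: "card ((S - x) \<inter> X0 \<inter> y) = b - p"
    unfolding a b t p using X0s ys by (simp_all add: card_Diff_subset_Int Int_ac)
  have "card ((S - x) \<inter> X0) = card ((S - x) \<inter> X0 \<inter> y) + card ((S - x) \<inter> X0 - y)"
    using fin by (intro card_Int_Diff) simp
  moreover have "card ((S - x) \<inter> y) = card ((S - x) \<inter> X0 \<inter> y) + card ((S - x - X0) \<inter> y)"
    using card_Int_Diff[of "(S - x) \<inter> y" X0] fin by (simp add: Int_ac Int_Diff)
  moreover have "card (S - x) = card ((S - x) \<inter> X0) + card ((S - x - X0) \<inter> y) + card (S - x - X0 - y)"
    using card_Int_Diff[of "S - x" X0] card_Int_Diff[of "S - x - X0" y] fin by simp
  ultimately show "stats_feasible m a b t p"
    and "card ((S - x) \<inter> X0 \<inter> y) = b - p"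
    and "int (card ((S - x) \<inter> X0 - y)) = int m + int p - int a - int b"
    and "int (card ((S - x - X0) \<inter> y)) = int m + int p - int b - int t"
    and "int (card (S - x - X0 - y)) = int a + int b + int t + 1 - int m - int p"
    using cA cAX cAY cAXY \<open>p \<le> a\<close> \<open>p \<le> b\<close> \<open>p \<le> t\<close> \<open>a \<le> m\<close> \<open>t \<le> m\<close> \<open>a + t \<le> m + p\<close>
    unfolding stats_feasible_def by linarith+
qed

lemma sum_disjoint_verts_stats:
  assumes x: "x \<in> verts m" and y: "y \<in> verts m" and st: "stats m x y = (a, b, t, p)"
  shows "(\<Sum>z\<in>{z\<in>verts m. z \<inter> x = {}}. H (stats m z y))
    = nbr_combination m a b t p (\<lambda>a b t p. H (a, b, t, p))"
proof -
  let ?X0 = "base_x0 m" and ?S = "groundS m"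
  note xs = mem_vertsD[OF x] and ys = mem_vertsD[OF y]
  have X0s: "?X0 \<subseteq> ?S" "finite ?X0" "card ?X0 = m" by (auto simp: base_x0_def groundS_def)
  have a: "a = card (?X0 \<inter> x)" and b: "b = card (?X0 \<inter> y)" and t: "t = card (x \<inter> y)"
    and p: "p = card (?X0 \<inter> x \<inter> y)" using st by (auto simp: stats_def)
  define F where "F u v = H (m - a - of_bool u, b, m - t - of_bool v, b - p - of_bool (u \<and> v))" for u v
  have "stats m (?S - x - {e}) y = (m - a - of_bool (e \<in> ?X0), b, m - t - of_bool (e \<in> y),
      b - p - of_bool (e \<in> ?X0 \<and> e \<in> y))"
    if e: "e \<in> ?S - x" for e
  proof -
    have "?X0 \<inter> (?S - x - {e}) = (?X0 - x) - {e}" "?X0 \<inter> (?S - x - {e}) \<inter> y = (?X0 \<inter> y - x) - {e}"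
      "(?S - x - {e}) \<inter> y = (y - x) - {e}" using X0s ys by blast+
    with e X0s xs ys show ?thesis unfolding a b t p stats_def
      by (simp add: card_Diff_singleton_if card_Diff_subset_Int Int_ac)
  qed
  then have "(\<Sum>z\<in>{z\<in>verts m. z \<inter> x = {}}. H (stats m z y)) = (\<Sum>e\<in>?S - x. F (e \<in> ?X0) (e \<in> y))"
    unfolding sum_disjoint_verts[OF x] F_def by (intro sum.cong) auto
  also have "\<dots> = of_nat (card ((?S - x) \<inter> ?X0 \<inter> y)) * F True True
      + of_nat (card ((?S - x) \<inter> ?X0 - y)) * F True False
      + of_nat (card ((?S - x - ?X0) \<inter> y)) * F False True + of_nat (card (?S - x - ?X0 - y)) * F False False"
    by (rule sum_split_membership2) (simp add: groundS_def)
  also have "\<dots> = nbr_combination m a b t p (\<lambda>a b t p. H (a, b, t, p))"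
    using nbr_region_cards[OF x y st] by (simp add: nbr_combination_def F_def)
  finally show ?thesis .
qed

definition target :: "nat \<Rightarrow> nat \<Rightarrow> nat \<Rightarrow> nat \<times> nat \<times> nat \<times> nat" where
  "target m i k = (let j = i div 2; s = k div 2 in
     if even i then
       if even k then (m - j - s, m - j, m - s, m - j - s) else (j + s, m - j, s, s)
     else
       if even k then (j + s, j, m - s, j) else (m - j - s - 1, j, s, 0))"

lemma target_even_even: "target m (2*j) (2*s) = (m - j - s, m - j, m - s, m - j - s)"
  by (simp add: target_def)

lemma target_even_odd: "target m (2*j) (2*s+1) = (j + s, m - j, s, s)"
  by (simp add: target_def)

lemma target_odd_even: "target m (2*j+1) (2*s) = (j + s, j, m - s, j)"
  by (simp add: target_def)

lemma target_odd_odd: "target m (2*j+1) (2*s+1) = (m - j - s - 1, j, s, 0)"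
  by (simp add: target_def)

lemma target_step_even_even:
  assumes F: "stats_feasible m a b t p" and A: "2*j + 2*s + 1 \<le> m"
  shows "(if odist_level m a = 2*j + 2*s + 1
      then nbr_combination m a b t p (\<lambda>a b t p. of_bool ((a, b, t, p) = target m (2*j) (2*s))) else 0)
     = int (s + 1) * of_bool ((a, b, t, p) = target m (2*j) (2*s+1))"
proof (cases "a = j + s")
  case True
  have "(m - a, b, m - t, b - p) = (m - j - s, m - j, m - s, m - j - s) \<longleftrightarrow> (a, b, t, p) = (j + s, m - j, s, s)"
  proof
    assume "(m - a, b, m - t, b - p) = (m - j - s, m - j, m - s, m - j - s)"
    then have "b = m - j" "m - t = m - s" "b - p = m - j - s" unfolding prod.inject by blast+
    with True A F have "t = s" "p = s" unfolding stats_feasible_def by linarith+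
    with \<open>b = m - j\<close> True show "(a, b, t, p) = (j + s, m - j, s, s)" by simp
  qed (use True A in auto)
  moreover have "(m - a, b, m - t - 1, b - p) \<noteq> (m - j - s, m - j, m - s, m - j - s)"
  proof
    assume "(m - a, b, m - t - 1, b - p) = (m - j - s, m - j, m - s, m - j - s)"
    then have "b = m - j" "m - t - 1 = m - s" "b - p = m - j - s" unfolding prod.inject by blast+
    with True A F show False unfolding stats_feasible_def by linarith
  qed
  moreover have "m - a - 1 \<noteq> m - j - s" using True A by simp
  moreover have "odist_level m a = 2*j + 2*s + 1" using odist_level_eq_odd_iff[of "j+s" m a] A True by simp
  moreover have "int a + int b + int t + 1 - int m - int p = int (s + 1)" if "(a, b, t, p) = (j + s, m - j, s, s)"
    using that A by auto
  ultimately show ?thesis unfolding nbr_combination_def target_even_even target_even_odd by auto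
next
  case False
  then show ?thesis using odist_level_eq_odd_iff[of "j+s" m a] A unfolding target_even_odd by auto
qed

lemma target_step_even_odd:
  assumes F: "stats_feasible m a b t p" and A: "2*j + 2*s + 2 \<le> m"
  shows "(if odist_level m a = 2*j + 2*s + 2
      then nbr_combination m a b t p (\<lambda>a b t p. of_bool ((a, b, t, p) = target m (2*j) (2*s+1))) else 0)
     = int (s + 1) * of_bool ((a, b, t, p) = target m (2*j) (2*s+2))"
proof -
  have T: "target m (2*j) (2*s+2) = (m - j - s - 1, m - j, m - s - 1, m - j - s - 1)"
    using target_even_even[of m j "s+1"] by simp
  have D: "odist_level m a = 2*j + 2*s + 2 \<longleftrightarrow> a = m - j - s - 1"
    using odist_level_eq_even_iff[of a m "j+s+1"] A F unfolding stats_feasible_def by simp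
  show ?thesis
  proof (cases "a = m - j - s - 1")
    case True
    have "(m - a - 1, b, m - t - 1, b - p - 1) = (j + s, m - j, s, s)
        \<longleftrightarrow> (a, b, t, p) = (m - j - s - 1, m - j, m - s - 1, m - j - s - 1)"
    proof
      assume "(m - a - 1, b, m - t - 1, b - p - 1) = (j + s, m - j, s, s)"
      then have "b = m - j" "m - t - 1 = s" "b - p - 1 = s" unfolding prod.inject by blast+
      with True A F have "p = m - j - s - 1" "t = m - s - 1" unfolding stats_feasible_def by linarith+
      with \<open>b = m - j\<close> True show "(a, b, t, p) = (m - j - s - 1, m - j, m - s - 1, m - j - s - 1)" by simp
    qed (use True A in auto)
    moreover have "(m - a - 1, b, m - t, b - p) \<noteq> (j + s, m - j, s, s)"
    proof
      assume "(m - a - 1, b, m - t, b - p) = (j + s, m - j, s, s)"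
      then have "b = m - j" "b - p = s" unfolding prod.inject by blast+
      with True A F show False unfolding stats_feasible_def by linarith
    qed
    moreover have "m - a \<noteq> j + s" using True A by simp
    moreover have "int (b - p) = int (s + 1)" if "(a, b, t, p) = (m - j - s - 1, m - j, m - s - 1, m - j - s - 1)"
      using that A by auto
    ultimately show ?thesis using D True unfolding nbr_combination_def target_even_odd T by auto
  qed (use D T in simp)
qed

lemma target_step_odd_even:
  assumes F: "stats_feasible m a b t p" and A: "2*j + 2*s + 2 \<le> m"
  shows "(if odist_level m a = 2*j + 1 + 2*s + 1
      then nbr_combination m a b t p (\<lambda>a b t p. of_bool ((a, b, t, p) = target m (2*j+1) (2*s))) else 0)
     = int (s + 1) * of_bool ((a, b, t, p) = target m (2*j+1) (2*s+1))"
proof -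
  have D: "odist_level m a = 2*j + 1 + 2*s + 1 \<longleftrightarrow> a = m - j - s - 1"
    using odist_level_eq_even_iff[of a m "j+s+1"] A F unfolding stats_feasible_def by simp
  show ?thesis
  proof (cases "a = m - j - s - 1")
    case True
    have "int (b - p) * of_bool ((m - a - 1, b, m - t - 1, b - p - 1) = (j + s, j, m - s, j)) = 0"
      \<comment> \<open>with truncated subtraction the match forces b - p = 0, i.e. an empty region\<close>
      by auto
    moreover have "(m - a - 1, b, m - t, b - p) = (j + s, j, m - s, j) \<longleftrightarrow> (a, b, t, p) = (m - j - s - 1, j, s, 0)"
    proof
      assume "(m - a - 1, b, m - t, b - p) = (j + s, j, m - s, j)"
      then have "b = j" "m - t = m - s" "b - p = j" unfolding prod.inject by blast+
      with True A F have "t = s" "p = 0" unfolding stats_feasible_def by linarith+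
      with \<open>b = j\<close> True show "(a, b, t, p) = (m - j - s - 1, j, s, 0)" by simp
    qed (use True A in auto)
    moreover have "m - a \<noteq> j + s" using True A by simp
    moreover have "int m + int p - int a - int b = int (s + 1)" if "(a, b, t, p) = (m - j - s - 1, j, s, 0)"
      using that A by auto
    ultimately show ?thesis using D True unfolding nbr_combination_def target_odd_even target_odd_odd by auto
  next
    case False
    then show ?thesis unfolding target_odd_odd using D by simp
  qed
qed

lemma target_step_odd_odd:
  assumes F: "stats_feasible m a b t p" and A: "2*j + 2*s + 3 \<le> m"
  shows "(if odist_level m a = 2*j + 1 + 2*s + 2
      then nbr_combination m a b t p (\<lambda>a b t p. of_bool ((a, b, t, p) = target m (2*j+1) (2*s+1))) else 0)
     = int (s + 1) * of_bool ((a, b, t, p) = target m (2*j+1) (2*s+2))"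
proof -
  have T: "target m (2*j+1) (2*s+2) = (j + s + 1, j, m - s - 1, j)"
    using target_odd_even[of m j "s+1"] by simp
  have D: "odist_level m a = 2*j + 1 + 2*s + 2 \<longleftrightarrow> a = j + s + 1"
    using odist_level_eq_odd_iff[of "j+s+1" m a] A by simp
  show ?thesis
  proof (cases "a = j + s + 1")
    case True
    have "m - a - 1 \<noteq> m - j - s - 1" using True A by simp
    moreover have "(int m + int p - int b - int t) * of_bool ((m - a, b, m - t - 1, b - p) = (m - j - s - 1, j, s, 0))
       = int (s + 1) * of_bool ((a, b, t, p) = (j + s + 1, j, m - s - 1, j))"
    proof (cases "(m - a, b, m - t - 1, b - p) = (m - j - s - 1, j, s, 0)")
      case C: True
      then have "b = j" "m - t - 1 = s" "b - p = 0" unfolding prod.inject by blast+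
      with True A F have "p = j" unfolding stats_feasible_def by linarith
      show ?thesis
      proof (cases "t = m")
        case False
        with \<open>m - t - 1 = s\<close> F have "t = m - s - 1" unfolding stats_feasible_def by linarith
        with C True A \<open>b = j\<close> \<open>p = j\<close> show ?thesis by (simp add: of_nat_diff)
      qed (use C A \<open>b = j\<close> \<open>p = j\<close> in auto) \<comment> \<open>for t = m the weight m + p - b - t vanishes\<close>
    next
      case C: False
      have "(a, b, t, p) \<noteq> (j + s + 1, j, m - s - 1, j)"
      proof
        assume "(a, b, t, p) = (j + s + 1, j, m - s - 1, j)"
        with A have "(m - a, b, m - t - 1, b - p) = (m - j - s - 1, j, s, 0)" by simp
        with C show False by simp
      qed
      with C show ?thesis by (simp del: prod.inject)
    qed
    moreover have "(m - a, b, m - t, b - p) \<noteq> (m - j - s - 1, j, s, 0)"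
    proof
      assume "(m - a, b, m - t, b - p) = (m - j - s - 1, j, s, 0)"
      then have "b = j" "m - t = s" "b - p = 0" unfolding prod.inject by blast+
      with True A F show False unfolding stats_feasible_def by linarith
    qed
    ultimately show ?thesis using D True unfolding nbr_combination_def target_odd_odd T by auto
  qed (use D T in simp)
qed

lemma target_step:
  assumes F: "stats_feasible m a b t p" and A: "i + Suc k \<le> m"
  shows "(if odist_level m a = i + Suc k
      then nbr_combination m a b t p (\<lambda>a b t p. of_bool ((a, b, t, p) = target m i k)) else 0)
     = int (k div 2 + 1) * of_bool ((a, b, t, p) = target m i (Suc k))"
proof -
  obtain j s where "i = 2 * j \<or> i = 2 * j + 1" "k = 2 * s \<or> k = 2 * s + 1"
    by (metis evenE oddE)
  then consider "i = 2 * j" "k = 2 * s" | "i = 2 * j" "k = 2 * s + 1"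
    | "i = 2 * j + 1" "k = 2 * s" | "i = 2 * j + 1" "k = 2 * s + 1"
    by blast
  then show ?thesis
  proof cases
    case 1 then show ?thesis using target_step_even_even[OF F, of j s] A by (simp cong: if_cong split del: if_split)
  next
    case 2 then show ?thesis using target_step_even_odd[OF F, of j s] A by (simp cong: if_cong split del: if_split)
  next
    case 3 then show ?thesis using target_step_odd_even[OF F, of j s] A by (simp cong: if_cong split del: if_split)
  next
    case 4 then show ?thesis using target_step_odd_odd[OF F, of j s] A by (simp cong: if_cong split del: if_split)
  qed
qed

definition walk_count :: "nat \<Rightarrow> nat" where
  "walk_count k = fact (k div 2) ^ 2 * (if even k then 1 else k div 2 + 1)"

lemma walk_count_Suc: "walk_count (Suc k) = walk_count k * (k div 2 + 1)"
  by (cases "even k") (auto simp: walk_count_def power2_eq_square algebra_simps elim!: oddE)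

lemma Pmat_Suc_eq_sum:
  assumes x: "x \<in> verts m"
  shows "Pmat m i (Suc k) x y =
    (if odist m (base_x0 m) x = i + Suc k then \<Sum>z\<in>{z\<in>verts m. z \<inter> x = {}}. Pmat m i k z y else 0)"
proof -
  have "(\<Sum>w\<in>verts m. Estar m (i + Suc k) x w * adjA m w z) =
      (if odist m (base_x0 m) x = i + Suc k then adjA m x z else 0)" for z
  proof -
    have "(\<Sum>w\<in>verts m. Estar m (i + Suc k) x w * adjA m w z) =
        (\<Sum>w\<in>verts m. if w = x then (if odist m (base_x0 m) x = i + Suc k then adjA m x z else 0) else 0)"
      by (rule sum.cong) (auto simp: Estar_def x)
    then show ?thesis using x finite_verts by (simp add: sum.delta')
  qed
  then have "Pmat m i (Suc k) x y =
      (\<Sum>z\<in>verts m. (if odist m (base_x0 m) x = i + Suc k then adjA m x z else 0) * Pmat m i k z y)"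
    by (simp add: mmult_def)
  also have "\<dots> = (if odist m (base_x0 m) x = i + Suc k
      then \<Sum>z\<in>verts m. if z \<inter> x = {} then Pmat m i k z y else 0 else 0)"
    by (auto intro!: sum.cong simp: adjA_def x Int_commute)
  finally show ?thesis using finite_verts by (simp add: sum.inter_filter)
qed

lemma Estar_eq_target_indicator:
  assumes "1 \<le> m" "i \<le> m" and x: "x \<in> verts m" and y: "y \<in> verts m"
  shows "Estar m i x y = of_bool (stats m x y = target m i 0)"
proof (cases "x = y")
  case True
  let ?b = "card (base_x0 m \<inter> y)"
  have b: "?b \<le> m" using card_mono[of "base_x0 m" "base_x0 m \<inter> y"] by (simp add: base_x0_def)
  have "stats m x y = (?b, ?b, m, ?b)" using True mem_vertsD[OF y] by (simp add: stats_def)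
  moreover have "odist_level m ?b = i \<longleftrightarrow> (?b, ?b, m, ?b) = target m i 0"
  proof (cases "even i")
    case True
    then obtain j where "i = 2 * j" by blast
    then show ?thesis using odist_level_eq_even_iff[OF b, of j] assms by (simp add: target_def)
  next
    case False
    then obtain j where "i = 2 * j + 1" using oddE by blast
    then show ?thesis using odist_level_eq_odd_iff[of j m ?b] assms by (simp add: target_def)
  qed
  ultimately show ?thesis using True y by (simp add: Estar_def odist_base_x0)
next
  case False
  then have "card (x \<inter> y) \<noteq> m" using verts_eq_iff_card_Int[OF x y] by simp
  then show ?thesis using False by (auto simp: Estar_def stats_def target_def Let_def)
qed

theorem Pmat_eq_target_indicator:
  assumes "1 \<le> m" "i + k \<le> m" "x \<in> verts m" "y \<in> verts m"
  shows "Pmat m i k x y = int (walk_count k) * of_bool (stats m x y = target m i k)"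
  using assms(2-)
proof (induction k arbitrary: x)
  case 0
  then show ?case using Estar_eq_target_indicator[OF assms(1)] by (simp add: walk_count_def)
next
  case (Suc k)
  obtain a b t p where st: "stats m x y = (a, b, t, p)" by (metis prod_cases4)
  have a: "card (base_x0 m \<inter> x) = a" using st by (simp add: stats_def)
  have "(\<Sum>z\<in>{z\<in>verts m. z \<inter> x = {}}. Pmat m i k z y)
      = (\<Sum>z\<in>{z\<in>verts m. z \<inter> x = {}}. int (walk_count k) * of_bool (stats m z y = target m i k))"
    using Suc by (intro sum.cong) auto
  also have "\<dots> = int (walk_count k) * nbr_combination m a b t p (\<lambda>a b t p. of_bool ((a, b, t, p) = target m i k))"
    using sum_disjoint_verts_stats[OF Suc.prems(2,3) st, where H = "\<lambda>q. int (walk_count k) * of_bool (q = target m i k)"]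
    by (simp add: nbr_combination_scale)
  finally have "Pmat m i (Suc k) x y = int (walk_count k) *
      (if odist_level m a = i + Suc k then nbr_combination m a b t p (\<lambda>a b t p. of_bool ((a, b, t, p) = target m i k)) else 0)"
    by (simp only: Pmat_Suc_eq_sum[OF Suc.prems(2)] odist_base_x0 a mult_zero_right if_distrib[of "(*) _"])
  also have "\<dots> = int (walk_count (Suc k)) * of_bool (stats m x y = target m i (Suc k))"
    using target_step[OF nbr_region_cards(1)[OF Suc.prems(2,3) st] Suc.prems(1)]
    by (simp add: st walk_count_Suc algebra_simps)
  finally show ?case .
qed

lemma Mmat_eq_stats_indicator:
  "x \<in> verts m \<Longrightarrow> y \<in> verts m \<Longrightarrow> Mmat m A B T P x y = of_bool (stats m x y = (A, B, T, P))"
  by (simp add: Mmat_def stats_def)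

lemma Pmat_eq_Mmat_target:
  assumes "1 \<le> m" "i + k \<le> m" "x \<in> verts m" "y \<in> verts m"
  shows "Pmat m i k x y = int (walk_count k) * (case target m i k of (A, B, T, P) \<Rightarrow> Mmat m A B T P x y)"
  using Pmat_eq_target_indicator[OF assms] Mmat_eq_stats_indicator[OF assms(3,4)]
  by (simp split: prod.split)

theorem lemma5p1:
  fixes m i k :: nat
  assumes "m \<ge> 3" and "i + k \<le> m"
  shows
   "(even i \<and> odd k \<longrightarrow> (\<forall>x\<in>verts m. \<forall>y\<in>verts m.
       Pmat m i k x y = int ((fact ((k - 1) div 2))^2 * ((k + 1) div 2))
         * Mmat m ((i + k - 1) div 2) ((2*m - i) div 2) ((k - 1) div 2) ((k - 1) div 2) x y))
  \<and> (even i \<and> even k \<and> k \<ge> 2 \<longrightarrow> (\<forall>x\<in>verts m. \<forall>y\<in>verts m.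
       Pmat m i k x y = int ((fact (k div 2))^2)
         * Mmat m ((2*m - i - k) div 2) ((2*m - i) div 2) ((2*m - k) div 2) ((2*m - i - k) div 2) x y))
  \<and> (odd i \<and> odd k \<longrightarrow> (\<forall>x\<in>verts m. \<forall>y\<in>verts m.
       Pmat m i k x y = int ((fact ((k - 1) div 2))^2 * ((k + 1) div 2))
         * Mmat m ((2*m - i - k) div 2) ((i - 1) div 2) ((k - 1) div 2) 0 x y))
  \<and> (odd i \<and> even k \<and> k \<ge> 2 \<longrightarrow> (\<forall>x\<in>verts m. \<forall>y\<in>verts m.
       Pmat m i k x y = int ((fact (k div 2))^2)
         * Mmat m ((i + k - 1) div 2) ((i - 1) div 2) ((2*m - k) div 2) ((i - 1) div 2) x y))"
proof -
  have "even i \<Longrightarrow> odd k \<Longrightarrow> target m i k = ((i + k - 1) div 2, (2*m - i) div 2, (k - 1) div 2, (k - 1) div 2)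
      \<and> walk_count k = fact ((k - 1) div 2) ^ 2 * ((k + 1) div 2)"
    and "even i \<Longrightarrow> even k \<Longrightarrow> target m i k = ((2*m - i - k) div 2, (2*m - i) div 2, (2*m - k) div 2, (2*m - i - k) div 2)
      \<and> walk_count k = fact (k div 2) ^ 2"
    and "odd i \<Longrightarrow> odd k \<Longrightarrow> target m i k = ((2*m - i - k) div 2, (i - 1) div 2, (k - 1) div 2, 0)
      \<and> walk_count k = fact ((k - 1) div 2) ^ 2 * ((k + 1) div 2)"
    and "odd i \<Longrightarrow> even k \<Longrightarrow> target m i k = ((i + k - 1) div 2, (i - 1) div 2, (2*m - k) div 2, (i - 1) div 2)
      \<and> walk_count k = fact (k div 2) ^ 2"
    by (auto simp: target_def walk_count_def elim!: evenE oddE)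
  then show ?thesis
    using Pmat_eq_Mmat_target[OF _ assms(2)] assms(1) by simp
qed

end
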